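(* Let $n\geq 2$ and suppose the final $2n$ modes of a state $|\phi\rangle$ are given as input to the $n$-GHZ state analyzer (with these modes labeled $0,\dots,2n-1$), and that the analyzer heralds success. Write the part of the input on the analyzer modes in terms of Fock patterns $\vec m=(m_0,\dots,m_{2n-1})$ (internal states suppressed). Then, given success, only terms of the form $\sum_{\vec m\in\mathcal S}c_{\vec m}|\phi_{\vec m}\rangle|\vec m\rangle$ may affect the output state, where $\mathcal S=\{\vec m: c_{\vec m}\neq0,\ m_{2i+1}+m_{2i+2}=1\text{ for all }0\le i<n\}$ (with the convention $m_{2n}=m_0$). Moreover, if for all $\vec m\in\mathcal S$ and all $0\le i<n$ we have $(m_{2i},m_{2i+1})\notin\{(1,1),(0,0)\}$, then only the two terms $\vec m=(1,0)^n=(1,0,1,0,\dots,1,0)$ and $\vec m=(0,1)^n=(0,1,\dots,0,1)$ may affect the measurement (and only if both have nonzero coefficient).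
   Context: Photonic model: photons occupy spatial modes and carry internal states; linear optics acts on spatial modes; photon-number-resolving (PNR) detection reveals only the total photon number in each spatial mode. Hadamard beamsplitter on ordered pair $(p,q)$: $a_p^\dagger\mapsto(a_p^\dagger+a_q^\dagger)/\sqrt2$, $a_q^\dagger\mapsto(a_p^\dagger-a_q^\dagger)/\sqrt2$ (the second mode receives the phase). The $n$-GHZ state analyzer on modes $0,\dots,2n-1$: apply the Hadamard beamsplitter to each ordered pair in $\{(1,2),(3,4),\dots,(2n-3,2n-2),(2n-1,0)\}$, PNR-measure all $2n$ modes obtaining pattern $(m_0,\dots,m_{2n-1})$, and herald success iff $m_{2i+1}+m_{2i+2}=1$ for all $0\le i<n$ (with $m_{2n}=m_0$). *)

theory Defs
  imports Complex_Main
begin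

text \<open>Fock basis states on the analyzer modes: a configuration f assigns to each
spatial mode j and internal state k the photon number f j k.
A (joint) state is a finitely supported amplitude function on pairs (a, f), where
a indexes a basis of the remaining (non-analyzer) part of the system.\<close>

type_synonym 'i fock = "nat \<Rightarrow> 'i \<Rightarrow> nat"
type_synonym ('a, 'i) state = "'a \<times> 'i fock \<Rightarrow> complex"

text \<open>Two-mode Hadamard beamsplitter amplitude
  <c,d| U |a,b>, where a_p^dag -> (a_p^dag + a_q^dag)/sqrt 2,
  a_q^dag -> (a_p^dag - a_q^dag)/sqrt 2 (single internal state).
  Obtained from expanding (x+y)^a (x-y)^b / sqrt(2^(a+b) a! b!) and x^c y^d |0> = sqrt(c! d!) |c,d>.\<close>
definition bs_amp :: "nat \<Rightarrow> nat \<Rightarrow> nat \<Rightarrow> nat \<Rightarrow> complex" where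
  "bs_amp a b c d =
     (if c + d = a + b then
        complex_of_real (sqrt (fact c * fact d / (fact a * fact b * 2 ^ (a + b))))
        * (\<Sum>j = 0..c. of_nat (a choose j) * of_nat (b choose (c - j)) * (-1) ^ (b + c + j))
      else 0)"

definition bs_mat :: "nat \<Rightarrow> nat \<Rightarrow> ('i::finite) fock \<Rightarrow> 'i fock \<Rightarrow> complex" where
  "bs_mat p q f g =
     (if \<forall>j k. j \<noteq> p \<and> j \<noteq> q \<longrightarrow> g j k = f j k
      then (\<Prod>k\<in>UNIV. bs_amp (f p k) (f q k) (g p k) (g q k))
      else 0)"

definition apply_bs :: "nat \<Rightarrow> nat \<Rightarrow> ('a, 'i::finite) state \<Rightarrow> ('a, 'i) state" where
  "apply_bs p q \<psi> = (\<lambda>(a, g). \<Sum>f\<in>{f. \<psi> (a, f) \<noteq> 0}. bs_mat p q f g * \<psi> (a, f))"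

definition ghz_pairs :: "nat \<Rightarrow> (nat \<times> nat) list" where
  "ghz_pairs n = map (\<lambda>i. (2 * i + 1, (2 * i + 2) mod (2 * n))) [0..<n]"

definition ghz_optics :: "nat \<Rightarrow> ('a, 'i::finite) state \<Rightarrow> ('a, 'i) state" where
  "ghz_optics n \<psi> = fold (\<lambda>(p, q) \<phi>. apply_bs p q \<phi>) (ghz_pairs n) \<psi>"

text \<open>PNR detection sees only the total photon number per spatial mode.\<close>
definition pattern :: "('i::finite) fock \<Rightarrow> nat \<Rightarrow> nat" where
  "pattern f j = (\<Sum>k\<in>UNIV. f j k)"

definition herald :: "nat \<Rightarrow> (nat \<Rightarrow> nat) \<Rightarrow> bool" where
  "herald n m = (\<forall>i<n. m (2 * i + 1) + m ((2 * i + 2) mod (2 * n)) = 1)"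

text \<open>Unnormalized post-measurement state after observing PNR pattern m on modes 0..2n-1.\<close>
definition proj_outcome :: "nat \<Rightarrow> (nat \<Rightarrow> nat) \<Rightarrow> ('a, 'i::finite) state \<Rightarrow> ('a, 'i) state" where
  "proj_outcome n m \<phi> = (\<lambda>(a, g). if \<forall>j<2 * n. pattern g j = m j then \<phi> (a, g) else 0)"

definition restrict_terms :: "((nat \<Rightarrow> nat) \<Rightarrow> bool) \<Rightarrow> ('a, 'i::finite) state \<Rightarrow> ('a, 'i) state" where
  "restrict_terms P \<psi> = (\<lambda>(a, f). if P (pattern f) then \<psi> (a, f) else 0)"

definition S_set :: "nat \<Rightarrow> ('a, 'i::finite) state \<Rightarrow> (nat \<Rightarrow> nat) set" where
  "S_set n \<psi> = {m. (\<exists>a f. \<psi> (a, f) \<noteq> 0 \<and> pattern f = m) \<and> herald n m}"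

definition alt10 :: "nat \<Rightarrow> nat \<Rightarrow> nat" where
  "alt10 n j = (if j < 2 * n \<and> even j then 1 else 0)"

definition alt01 :: "nat \<Rightarrow> nat \<Rightarrow> nat" where
  "alt01 n j = (if j < 2 * n \<and> odd j then 1 else 0)"

end

theory Submission
  imports Defs "HOL-Library.FuncSet"
begin

text \<open>Each beamsplitter of the analyzer acts on one pair (2i+1, 2i+2 mod 2n), conserves the
total photon number of that pair and leaves all other modes untouched; since the pairs are
disjoint, every pair sum is conserved by the whole network. The heralding condition is a
condition on exactly these pair sums, so an input term can reach a heralded output pattern only
if it satisfies the heralding condition itself, i.e. only the terms indexed by S matter.
For the second part, the heralding condition forces every mode to hold at most one photon;
excluding (1,1) and (0,0) on the pairs (2i, 2i+1) then makes m(2i+1) = 1 - m(2i), and the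
heralding condition propagates m(2i) = m(2i+2) around the ring, leaving only (1,0)^n and (0,1)^n.
Neither part needs the hypothesis n \<ge> 2.\<close>

lemma bs_mat_nonzeroD:
  assumes "bs_mat p q f g \<noteq> 0"
  shows "\<And>j k. j \<noteq> p \<Longrightarrow> j \<noteq> q \<Longrightarrow> g j k = f j k"
    and "\<And>k. g p k + g q k = f p k + f q k"
proof -
  show "\<And>j k. j \<noteq> p \<Longrightarrow> j \<noteq> q \<Longrightarrow> g j k = f j k"
    using assms unfolding bs_mat_def by (auto split: if_splits)
  fix k
  have "(\<Prod>k\<in>UNIV. bs_amp (f p k) (f q k) (g p k) (g q k)) \<noteq> 0"
    using assms unfolding bs_mat_def by (auto split: if_splits)
  then have "bs_amp (f p k) (f q k) (g p k) (g q k) \<noteq> 0"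
    by auto
  then show "g p k + g q k = f p k + f q k"
    unfolding bs_amp_def by (auto split: if_splits)
qed

lemma finite_bs_mat_support: "finite {g. bs_mat p q f (g :: ('i::finite) fock) \<noteq> 0}"
proof -
  define box where "box = Pi\<^sub>E (UNIV :: 'i set) (\<lambda>k. {0..f p k + f q k} \<times> {0..f p k + f q k})"
  define glue where "glue = (\<lambda>h :: 'i \<Rightarrow> nat \<times> nat. \<lambda>j k.
    if j = p then fst (h k) else if j = q then snd (h k) else f j k)"
  have "{g. bs_mat p q f g \<noteq> 0} \<subseteq> glue ` box"
  proof
    fix g
    assume "g \<in> {g. bs_mat p q f g \<noteq> 0}"
    then have nz: "bs_mat p q f g \<noteq> 0"
      by simp
    have "g p k \<le> f p k + f q k \<and> g q k \<le> f p k + f q k" for k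
      using bs_mat_nonzeroD(2)[OF nz, of k] by linarith
    then have "(\<lambda>k. (g p k, g q k)) \<in> box"
      unfolding box_def by (auto simp: PiE_UNIV_domain)
    moreover have "g = glue (\<lambda>k. (g p k, g q k))"
      using bs_mat_nonzeroD(1)[OF nz] unfolding glue_def by (intro ext) auto
    ultimately show "g \<in> glue ` box"
      by blast
  qed
  moreover have "finite box"
    unfolding box_def by (rule finite_PiE) auto
  ultimately show ?thesis
    using finite_subset by blast
qed

lemma finite_apply_bs_support:
  assumes "finite {f. \<phi> (a, f) \<noteq> 0}"
  shows "finite {g. apply_bs p q (\<phi> :: ('a, 'i::finite) state) (a, g) \<noteq> 0}"
proof (rule finite_subset)
  show "{g. apply_bs p q \<phi> (a, g) \<noteq> 0} \<subseteq> (\<Union>f\<in>{f. \<phi> (a, f) \<noteq> 0}. {g. bs_mat p q f g \<noteq> 0})"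
    unfolding apply_bs_def by (auto, metis (mono_tags, lifting) mem_Collect_eq mult_eq_0_iff sum.neutral)
  show "finite (\<Union>f\<in>{f. \<phi> (a, f) \<noteq> 0}. {g. bs_mat p q f g \<noteq> 0})"
    using assms finite_bs_mat_support by blast
qed

lemma apply_bs_cong:
  fixes \<phi> \<chi> :: "('a, 'i::finite) state"
  assumes "finite {f. \<phi> (a, f) \<noteq> 0}" and "finite {f. \<chi> (a, f) \<noteq> 0}"
    and "\<And>f. bs_mat p q f g \<noteq> 0 \<Longrightarrow> \<phi> (a, f) = \<chi> (a, f)"
  shows "apply_bs p q \<phi> (a, g) = apply_bs p q \<chi> (a, g)"
proof -
  define U where "U = {f. \<phi> (a, f) \<noteq> 0} \<union> {f. \<chi> (a, f) \<noteq> 0}"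
  have "finite U"
    using assms(1,2) by (simp add: U_def)
  have "apply_bs p q \<phi> (a, g) = (\<Sum>f\<in>U. bs_mat p q f g * \<phi> (a, f))"
    unfolding apply_bs_def prod.case using \<open>finite U\<close> by (intro sum.mono_neutral_left) (auto simp: U_def)
  also have "\<dots> = (\<Sum>f\<in>U. bs_mat p q f g * \<chi> (a, f))"
    using assms(3) by (intro sum.cong) (auto simp: U_def)
  also have "\<dots> = apply_bs p q \<chi> (a, g)"
    unfolding apply_bs_def prod.case using \<open>finite U\<close> by (intro sum.mono_neutral_right) (auto simp: U_def)
  finally show ?thesis .
qed

lemma fold_apply_bs_cong:
  fixes \<phi> \<chi> :: "('a, 'i::finite) state"
  assumes "\<And>a. finite {f. \<phi> (a, f) \<noteq> 0}" and "\<And>a. finite {f. \<chi> (a, f) \<noteq> 0}"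
    and "\<And>p q f g. (p, q) \<in> set ps \<Longrightarrow> bs_mat p q f g \<noteq> 0 \<Longrightarrow> H g \<Longrightarrow> H f"
    and "\<And>a f. H f \<Longrightarrow> \<phi> (a, f) = \<chi> (a, f)"
    and "H g"
  shows "fold (\<lambda>(p, q) \<phi>. apply_bs p q \<phi>) ps \<phi> (a, g)
       = fold (\<lambda>(p, q) \<phi>. apply_bs p q \<phi>) ps \<chi> (a, g)"
  using assms
proof (induction ps arbitrary: \<phi> \<chi>)
  case Nil
  then show ?case
    by simp
next
  case (Cons pq ps)
  obtain p q where pq: "pq = (p, q)"
    by fastforce
  have "fold (\<lambda>(p, q) \<phi>. apply_bs p q \<phi>) ps (apply_bs p q \<phi>) (a, g)
      = fold (\<lambda>(p, q) \<phi>. apply_bs p q \<phi>) ps (apply_bs p q \<chi>) (a, g)"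
  proof (rule Cons.IH)
    show "\<And>a. finite {f. apply_bs p q \<phi> (a, f) \<noteq> 0}" "\<And>a. finite {f. apply_bs p q \<chi> (a, f) \<noteq> 0}"
      using Cons.prems(1,2) by (simp_all add: finite_apply_bs_support)
    show "apply_bs p q \<phi> (a, f) = apply_bs p q \<chi> (a, f)" if "H f" for a f
    proof (rule apply_bs_cong)
      show "\<phi> (a, f') = \<chi> (a, f')" if "bs_mat p q f' f \<noteq> 0" for f'
        using Cons.prems(3)[of p q f' f] Cons.prems(4) pq \<open>H f\<close> that by simp
    qed (use Cons.prems in auto)
    show "H f" if "(p', q') \<in> set ps" "bs_mat p' q' f g' \<noteq> 0" "H g'" for p' q' f g'
      using Cons.prems(3)[of p' q' f g'] that by simp
    show "H g"
      by (rule Cons.prems(5))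
  qed
  then show ?case
    by (simp add: pq)
qed

lemma pattern_bs_mat:
  assumes "bs_mat p q f g \<noteq> 0"
  shows "\<And>j. j \<noteq> p \<Longrightarrow> j \<noteq> q \<Longrightarrow> pattern g j = pattern f j"
    and "pattern g p + pattern g q = pattern f p + pattern f q"
  using bs_mat_nonzeroD[OF assms] unfolding pattern_def by (simp_all add: sum.distrib[symmetric])

lemma ghz_pairs_disjoint:
  assumes "(p, q) \<in> set (ghz_pairs n)" and "(p', q') \<in> set (ghz_pairs n)" and "(p, q) \<noteq> (p', q')"
  shows "p \<noteq> p' \<and> p \<noteq> q' \<and> q \<noteq> p' \<and> q \<noteq> q'"
proof -
  have wrap: "(2 * i + 2) mod (2 * n) = (if i + 1 = n then 0 else 2 * i + 2)" if "i < n" for i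
    using that by auto
  obtain i where "i < n" "p = 2 * i + 1" "q = (2 * i + 2) mod (2 * n)"
    using assms(1) unfolding ghz_pairs_def by auto
  moreover obtain i' where "i' < n" "p' = 2 * i' + 1" "q' = (2 * i' + 2) mod (2 * n)"
    using assms(2) unfolding ghz_pairs_def by auto
  ultimately show ?thesis
    using assms(3) wrap[of i] wrap[of i'] by (auto split: if_splits; presburger)
qed

lemma herald_iff_ghz_pairs: "herald n m \<longleftrightarrow> (\<forall>(p, q) \<in> set (ghz_pairs n). m p + m q = 1)"
  unfolding herald_def ghz_pairs_def by auto

lemma herald_pattern_bs_mat_iff:
  assumes "(p, q) \<in> set (ghz_pairs n)" and "bs_mat p q f g \<noteq> 0"
  shows "herald n (pattern g) \<longleftrightarrow> herald n (pattern f)"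
proof -
  have "pattern g p' + pattern g q' = pattern f p' + pattern f q'"
    if "(p', q') \<in> set (ghz_pairs n)" for p' q'
  proof (cases "(p', q') = (p, q)")
    case True
    then show ?thesis
      using pattern_bs_mat(2)[OF assms(2)] by simp
  next
    case False
    then show ?thesis
      using ghz_pairs_disjoint[OF assms(1) that] pattern_bs_mat(1)[OF assms(2)] by metis
  qed
  then show ?thesis
    unfolding herald_iff_ghz_pairs by auto
qed

lemma herald_cong: "(\<And>j. j < 2 * n \<Longrightarrow> m j = m' j) \<Longrightarrow> herald n m \<longleftrightarrow> herald n m'"
  unfolding herald_def by (intro all_cong1 imp_cong refl) (auto simp: mult_2)

lemma proj_outcome_ghz_optics_restrict_terms:
  fixes \<psi> :: "('a, 'i::finite) state"
  assumes "finite {x. \<psi> x \<noteq> 0}"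
    and "\<And>a f. \<psi> (a, f) \<noteq> 0 \<Longrightarrow> herald n (pattern f) \<Longrightarrow> P (pattern f)"
    and "herald n m"
  shows "proj_outcome n m (ghz_optics n \<psi>) = proj_outcome n m (ghz_optics n (restrict_terms P \<psi>))"
proof -
  have fin: "finite {f. \<psi> (a, f) \<noteq> 0}" for a
    using finite_vimageI[OF assms(1), of "Pair a"] by (simp add: vimage_def inj_on_def)
  have "ghz_optics n \<psi> (a, g) = ghz_optics n (restrict_terms P \<psi>) (a, g)"
    if "herald n (pattern g)" for a g
    unfolding ghz_optics_def
  proof (rule fold_apply_bs_cong[where H = "\<lambda>g. herald n (pattern g)"])
    show "finite {f. restrict_terms P \<psi> (a, f) \<noteq> 0}" for a
      using fin by (rule rev_finite_subset) (auto simp: restrict_terms_def)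
    show "\<psi> (a, f) = restrict_terms P \<psi> (a, f)" if "herald n (pattern f)" for a f
      using assms(2) that by (auto simp: restrict_terms_def)
    show "herald n (pattern f)"
      if "(p, q) \<in> set (ghz_pairs n)" "bs_mat p q f g' \<noteq> 0" "herald n (pattern g')" for p q f g'
      using herald_pattern_bs_mat_iff[OF that(1,2)] that(3) by simp
  qed (use fin that in auto)
  moreover have "herald n (pattern g)" if "\<forall>j<2 * n. pattern g j = m j" for g
    using herald_cong[of n "pattern g" m] that assms(3) by simp
  ultimately show ?thesis
    unfolding proj_outcome_def by (intro ext) (auto split: prod.splits)
qed

lemma herald_le_1:
  assumes "herald n m" and "j < 2 * n"
  shows "m j \<le> 1"
proof -
  have pair: "m (2 * i + 1) + m ((2 * i + 2) mod (2 * n)) = 1" if "i < n" for i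
    using assms(1) that unfolding herald_def by blast
  consider i where "i < n" "j = 2 * i + 1" | i where "i < n" "j = (2 * i + 2) mod (2 * n)"
  proof (cases "odd j")
    case True
    then show ?thesis
      using that(1)[of "j div 2"] assms(2) by simp
  next
    case False
    then obtain b where "j = 2 * b" "b < n"
      using assms(2) by (auto elim!: evenE)
    show ?thesis
    proof (cases b)
      case 0
      have "(2 * (n - 1) + 2) mod (2 * n) = 0"
        using \<open>b < n\<close> by (cases n) simp_all
      then show ?thesis
        using that(2)[of "n - 1"] \<open>b < n\<close> \<open>j = 2 * b\<close> 0 by simp
    next
      case (Suc i)
      then show ?thesis
        using that(2)[of i] \<open>b < n\<close> \<open>j = 2 * b\<close> by simp
    qed
  qed
  then show ?thesis
    by cases (use pair in fastforce)+
qed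

lemma herald_alternating:
  assumes "herald n m" and "\<And>j. 2 * n \<le> j \<Longrightarrow> m j = 0"
    and "\<forall>i<n. (m (2 * i), m (2 * i + 1)) \<notin> {(1, 1), (0, 0)}"
  shows "m \<in> {alt10 n, alt01 n}"
proof -
  have odd_eq: "m (2 * i + 1) = 1 - m (2 * i)" if "i < n" for i
  proof -
    have "m (2 * i) \<le> 1" "m (2 * i + 1) \<le> 1"
      using herald_le_1[OF assms(1)] that by simp_all
    then show ?thesis
      using assms(3)[rule_format, OF that] by auto
  qed
  have "m (2 * Suc i) = m (2 * i)" if "Suc i < n" for i
  proof -
    have "(2 * i + 2) mod (2 * n) = 2 * i + 2"
      using that by simp
    then have "m (2 * i + 1) + m (2 * i + 2) = 1"
      using assms(1) that unfolding herald_def by (metis Suc_lessD)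
    then show ?thesis
      using odd_eq[of i] herald_le_1[OF assms(1), of "2 * i"] that by simp
  qed
  then have even_eq: "m (2 * i) = m 0" if "i < n" for i
    using that by (induction i) auto
  have pattern_eq: "m j = (if j < 2 * n then if even j then m 0 else 1 - m 0 else 0)" for j
  proof (cases "j < 2 * n")
    case True
    show ?thesis
    proof (cases "even j")
      case True
      then obtain i where "j = 2 * i"
        by (rule evenE)
      then show ?thesis
        using even_eq[of i] \<open>j < 2 * n\<close> by simp
    next
      case False
      then obtain i where "j = 2 * i + 1"
        by (rule oddE)
      then show ?thesis
        using even_eq[of i] odd_eq[of i] \<open>j < 2 * n\<close> by simp
    qed
  next
    case False
    then show ?thesis
      using assms(2) by simp
  qed
  have "m 0 = 0 \<or> m 0 = 1"
    using herald_le_1[OF assms(1), of 0] assms(2)[of 0] by (cases n) auto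
  moreover have "m j = alt10 n j" if "m 0 = 1" for j
    using pattern_eq[of j] that unfolding alt10_def by simp
  moreover have "m j = alt01 n j" if "m 0 = 0" for j
    using pattern_eq[of j] that unfolding alt01_def by simp
  ultimately show ?thesis
    by (metis ext insertCI)
qed

theorem lemma2:
  fixes n :: nat and \<psi> :: "('a, 'i::finite) state"
  assumes "n \<ge> 2"
    and "finite {x. \<psi> x \<noteq> 0}"
    and "\<forall>a f j k. \<psi> (a, f) \<noteq> 0 \<longrightarrow> 2 * n \<le> j \<longrightarrow> f j k = 0"
  shows "(\<forall>m. herald n m \<longrightarrow>
            proj_outcome n m (ghz_optics n \<psi>)
            = proj_outcome n m (ghz_optics n (restrict_terms (\<lambda>m. m \<in> S_set n \<psi>) \<psi>)))
       \<and> ((\<forall>m\<in>S_set n \<psi>. \<forall>i<n. (m (2 * i), m (2 * i + 1)) \<notin> {(1, 1), (0, 0)}) \<longrightarrow>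
            S_set n \<psi> \<subseteq> {alt10 n, alt01 n}
          \<and> (\<forall>m. herald n m \<longrightarrow>
               proj_outcome n m (ghz_optics n \<psi>)
               = proj_outcome n m (ghz_optics n (restrict_terms (\<lambda>m. m \<in> {alt10 n, alt01 n}) \<psi>))))"
proof -
  have in_S: "pattern f \<in> S_set n \<psi>" if "\<psi> (a, f) \<noteq> 0" "herald n (pattern f)" for a f
    using that unfolding S_set_def by blast
  have S_alternating: "S_set n \<psi> \<subseteq> {alt10 n, alt01 n}"
    if excl: "\<forall>m\<in>S_set n \<psi>. \<forall>i<n. (m (2 * i), m (2 * i + 1)) \<notin> {(1, 1), (0, 0)}"
  proof
    fix m
    assume "m \<in> S_set n \<psi>"
    then obtain a f where "\<psi> (a, f) \<noteq> 0" "m = pattern f" "herald n m"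
      unfolding S_set_def by blast
    then have "m j = 0" if "2 * n \<le> j" for j
      using assms(3) that by (simp add: pattern_def)
    then show "m \<in> {alt10 n, alt01 n}"
      using herald_alternating \<open>herald n m\<close> excl \<open>m \<in> S_set n \<psi>\<close> by blast
  qed
  have "proj_outcome n m (ghz_optics n \<psi>)
      = proj_outcome n m (ghz_optics n (restrict_terms (\<lambda>m. m \<in> S_set n \<psi>) \<psi>))"
    if "herald n m" for m
    using assms(2) in_S that by (rule proj_outcome_ghz_optics_restrict_terms)
  moreover have "proj_outcome n m (ghz_optics n \<psi>)
      = proj_outcome n m (ghz_optics n (restrict_terms (\<lambda>m. m \<in> {alt10 n, alt01 n}) \<psi>))"
    if "S_set n \<psi> \<subseteq> {alt10 n, alt01 n}" "herald n m" for m
  proof (rule proj_outcome_ghz_optics_restrict_terms[OF assms(2) _ that(2)])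
    show "pattern f \<in> {alt10 n, alt01 n}" if "\<psi> (a, f) \<noteq> 0" "herald n (pattern f)" for a f
      using in_S[OF that] \<open>S_set n \<psi> \<subseteq> {alt10 n, alt01 n}\<close> by blast
  qed
  ultimately show ?thesis
    using S_alternating by blast
qed

end
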